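(* Let $\bar a>0$, $X=[0,\bar a]$, and let $f:\mathbb{R}_{\ge0}\to\mathbb{R}_{\ge0}$ satisfy: (i) $f$ is $L$-Lipschitz; (ii) the restriction of $f$ to $X$ is strictly concave; (iii) $f(x)=0$ for all $x\ge\bar a$. Let $0<\alpha\le\frac{1}{L+1}$ and $g(x)=\alpha f(x)+(1-\alpha)x$. Then $g$ restricted to $X$ satisfies: $g$ maps $X$ into $X$; $g$ is strictly concave and Lipschitz continuous on $X$; $g(x)\ge0$ for all $x\in X$; with $\bar x$ the maximizer of $g$ on $X$, the restriction of $g$ to $[\bar x,\bar a]$ is Lipschitz with some constant strictly less than $1$; and there is a positive $b\in X$ with $g(b)<b$. Moreover, for every $x_0>0$, the fixed-point iteration $x_{k+1}=g(x_k)$ converges to a fixed point of $f$.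
   Context: A function $f$ is $L$-Lipschitz if $|f(x)-f(y)|\le L|x-y|$ for all $x,y$; Lipschitz continuous if $L$-Lipschitz for some $L>0$. $f$ is strictly concave on an interval if $f((1-\lambda)x+\lambda y)>(1-\lambda)f(x)+\lambda f(y)$ for all $x\ne y$ in it and $0<\lambda<1$. *)

theory Defs
  imports "HOL-Analysis.Analysis"
begin

definition strictly_concave_on :: "real set \<Rightarrow> (real \<Rightarrow> real) \<Rightarrow> bool" where
  "strictly_concave_on S f \<longleftrightarrow>
     (\<forall>x\<in>S. \<forall>y\<in>S. \<forall>t::real. x \<noteq> y \<and> 0 < t \<and> t < 1 \<longrightarrow>
        f ((1 - t) * x + t * y) > (1 - t) * f x + t * f y)"

end

theory Submission
  imports Defs
begin

text \<open>Since \<open>\<alpha> L \<le> 1 - \<alpha>\<close>, the slope \<open>1 - \<alpha>\<close> of the linear part of \<open>g\<close> dominates the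
  Lipschitz oscillation of \<open>\<alpha> f\<close>, so \<open>g\<close> is nondecreasing on \<open>[0, \<infinity>)\<close>; together with strict
  concavity it is strictly increasing on \<open>[0, abar]\<close>, so its unique maximiser there is \<open>abar\<close>
  and the interval \<open>[xbar, abar]\<close> degenerates to a point. Every orbit stays in some \<open>[0, M]\<close>
  with \<open>M \<ge> abar\<close>, which \<open>g\<close> maps into itself because \<open>g M = (1 - \<alpha>) M\<close>. Iterates of a
  monotone self-map of an interval are monotone and bounded, hence converge, by continuity to a
  fixed point of \<open>g\<close>, i.e. of \<open>f\<close>.\<close>

lemma mono_on_scale_add_linear:
  fixes f :: "real \<Rightarrow> real"
  assumes "L-lipschitz_on S f" and "0 \<le> \<alpha>" and "\<alpha> * L \<le> c"
  shows "mono_on S (\<lambda>x. \<alpha> * f x + c * x)"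
proof (rule mono_onI)
  fix x y assume "x \<in> S" "y \<in> S" "x \<le> y"
  then have "f x - f y \<le> L * (y - x)"
    using lipschitz_onD[OF assms(1), of x y] by (simp add: dist_real_def)
  then have "\<alpha> * (f x - f y) \<le> (\<alpha> * L) * (y - x)"
    using \<open>0 \<le> \<alpha>\<close> by (metis mult.assoc mult_left_mono)
  also have "\<dots> \<le> c * (y - x)"
    using \<open>x \<le> y\<close> assms(3) by (intro mult_right_mono) auto
  finally show "\<alpha> * f x + c * x \<le> \<alpha> * f y + c * y"
    by (simp add: algebra_simps)
qed

lemma strictly_concave_on_scale_add_linear:
  fixes \<alpha> c :: real
  assumes "strictly_concave_on S f" and "0 < \<alpha>"
  shows "strictly_concave_on S (\<lambda>x. \<alpha> * f x + c * x)"
  unfolding strictly_concave_on_def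
proof (intro ballI allI impI)
  fix x y t :: real assume "x \<in> S" "y \<in> S" "x \<noteq> y \<and> 0 < t \<and> t < 1"
  then have "(1 - t) * f x + t * f y < f ((1 - t) * x + t * y)"
    using assms(1) unfolding strictly_concave_on_def by blast
  then have "\<alpha> * ((1 - t) * f x + t * f y) < \<alpha> * f ((1 - t) * x + t * y)"
    using assms(2) by simp
  then show "(1 - t) * (\<alpha> * f x + c * x) + t * (\<alpha> * f y + c * y)
      < \<alpha> * f ((1 - t) * x + t * y) + c * ((1 - t) * x + t * y)"
    by (simp add: algebra_simps)
qed

lemma strict_mono_on_if_strictly_concave_mono_on:
  fixes g :: "real \<Rightarrow> real"
  assumes "strictly_concave_on S g" and "mono_on S g" and "convex S"
  shows "strict_mono_on S g"
proof (rule strict_mono_onI)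
  fix x y assume x: "x \<in> S" and y: "y \<in> S" and "x < y"
  define m where "m = (1 - 1/2) * x + 1/2 * y"
  have "m \<in> S"
    using convexD[OF assms(3) x y, of "1 - 1/2" "1/2"] by (simp add: m_def)
  have "g m \<le> g y"
    using mono_onD[OF assms(2) \<open>m \<in> S\<close> y] \<open>x < y\<close> by (simp add: m_def)
  moreover have "(1 - 1/2) * g x + 1/2 * g y < g m"
    using assms(1)[unfolded strictly_concave_on_def, rule_format, of x y "1/2"] x y \<open>x < y\<close>
    unfolding m_def by simp
  ultimately show "g x < g y" by simp
qed

lemma strict_mono_on_maximiser_interval_iff:
  fixes g :: "'a::linorder \<Rightarrow> 'b::linorder"
  assumes "strict_mono_on {a..b} g" and "a \<le> b"
  shows "x \<in> {a..b} \<and> (\<forall>y\<in>{a..b}. g y \<le> g x) \<longleftrightarrow> x = b"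
proof
  assume max: "x \<in> {a..b} \<and> (\<forall>y\<in>{a..b}. g y \<le> g x)"
  show "x = b"
  proof (rule ccontr)
    assume "x \<noteq> b"
    then have "g x < g b"
      using max \<open>a \<le> b\<close> by (intro strict_mono_onD[OF assms(1)]) auto
    moreover have "g b \<le> g x"
      using max \<open>a \<le> b\<close> by auto
    ultimately show False by simp
  qed
next
  assume "x = b"
  then show "x \<in> {a..b} \<and> (\<forall>y\<in>{a..b}. g y \<le> g x)"
    using \<open>a \<le> b\<close> strict_mono_on_leD[OF assms(1)] by auto
qed

lemma monoseq_if_iterates_mono_on:
  fixes g :: "'a::linorder \<Rightarrow> 'a"
  assumes "mono_on S g" and "\<forall>k. xs k \<in> S" and "\<forall>k. xs (Suc k) = g (xs k)"
  shows "monoseq xs"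
proof -
  have step: "xs (Suc i) \<le> xs (Suc j)" if "xs i \<le> xs j" for i j
    using that assms(2,3) by (auto intro: mono_onD[OF assms(1)])
  show ?thesis
  proof (cases "xs 0 \<le> xs 1")
    case True
    have "xs k \<le> xs (Suc k)" for k
      by (induction k) (use True step in auto)
    then show ?thesis by (rule mono_SucI1[rule_format])
  next
    case False
    have "xs (Suc k) \<le> xs k" for k
      by (induction k) (use False step in auto)
    then show ?thesis by (rule mono_SucI2[rule_format])
  qed
qed

lemma fixpoint_if_iterates_tendsto:
  fixes g :: "'a::t2_space \<Rightarrow> 'a"
  assumes "continuous_on S g" and "closed S" and "\<forall>k. xs k \<in> S"
    and "\<forall>k. xs (Suc k) = g (xs k)" and "xs \<longlonglongrightarrow> p"
  shows "p \<in> S" and "g p = p"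
proof -
  show "p \<in> S"
    using assms(2,3,5) closed_sequentially by blast
  then have "(\<lambda>k. g (xs k)) \<longlonglongrightarrow> g p"
    using assms by (intro continuous_on_tendsto_compose[OF assms(1,5)]) auto
  moreover have "(\<lambda>k. g (xs k)) \<longlonglongrightarrow> p"
    using LIMSEQ_Suc[OF assms(5)] assms(4) by simp
  ultimately show "g p = p" by (rule LIMSEQ_unique)
qed

lemma iterates_mono_on_interval_tendsto_fixpoint:
  fixes g :: "real \<Rightarrow> real"
  assumes "mono_on {a..b} g" and "g ` {a..b} \<subseteq> {a..b}" and "continuous_on {a..b} g"
    and "xs 0 \<in> {a..b}" and "\<forall>k. xs (Suc k) = g (xs k)"
  obtains p where "p \<in> {a..b}" and "g p = p" and "xs \<longlonglongrightarrow> p"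
proof -
  have in_ab: "\<forall>k. xs k \<in> {a..b}"
  proof
    fix k show "xs k \<in> {a..b}"
      by (induction k) (use assms(2,4,5) in \<open>auto simp: image_subset_iff\<close>)
  qed
  have "\<bar>xs k\<bar> \<le> \<bar>a\<bar> + \<bar>b\<bar>" for k
    using in_ab[rule_format, of k] by (simp add: abs_le_iff) arith
  then obtain p where lim: "xs \<longlonglongrightarrow> p"
    using monoseq_convergent monoseq_if_iterates_mono_on[OF assms(1) in_ab assms(5)] by blast
  note fixpoint = fixpoint_if_iterates_tendsto[OF assms(3) closed_atLeastAtMost in_ab assms(5) lim]
  show thesis
    using that[OF fixpoint lim] .
qed

locale relaxation =
  fixes abar L \<alpha> :: real and f g :: "real \<Rightarrow> real"
  assumes abar_pos: "abar > 0"
    and f_nonneg: "\<forall>x\<ge>0. f x \<ge> 0"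
    and f_lip: "L-lipschitz_on {0..} f"
    and f_conc: "strictly_concave_on {0..abar} f"
    and f_zero: "\<forall>x\<ge>abar. f x = 0"
    and alpha_pos: "0 < \<alpha>" and alpha_le: "\<alpha> \<le> 1 / (L + 1)"
    and g_def: "\<forall>x. g x = \<alpha> * f x + (1 - \<alpha>) * x"
begin

lemma g_eq: "g = (\<lambda>x. \<alpha> * f x + (1 - \<alpha>) * x)"
  using g_def by auto

lemma L_nonneg: "0 \<le> L"
  using lipschitz_on_nonneg[OF f_lip] .

lemma alpha_L_le_1_minus_alpha: "\<alpha> * L \<le> 1 - \<alpha>"
  using alpha_le L_nonneg by (simp add: field_simps)

lemma alpha_le_1: "\<alpha> \<le> 1"
  using alpha_L_le_1_minus_alpha mult_nonneg_nonneg[OF less_imp_le[OF alpha_pos] L_nonneg] by linarith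

lemma g_mono: "mono_on {0..} g"
  unfolding g_eq using mono_on_scale_add_linear[OF f_lip] alpha_pos alpha_L_le_1_minus_alpha by simp

lemma g_strictly_concave: "strictly_concave_on {0..abar} g"
  unfolding g_eq using strictly_concave_on_scale_add_linear[OF f_conc alpha_pos] .

lemma g_strict_mono: "strict_mono_on {0..abar} g"
proof -
  have "mono_on {0..abar} g"
    using mono_on_subset[OF g_mono] by auto
  then show ?thesis
    using strict_mono_on_if_strictly_concave_mono_on[OF g_strictly_concave] by simp
qed

lemma g_maximiser_iff: "xbar \<in> {0..abar} \<and> (\<forall>x\<in>{0..abar}. g x \<le> g xbar) \<longleftrightarrow> xbar = abar"
  using strict_mono_on_maximiser_interval_iff[OF g_strict_mono] abar_pos by simp

lemma g_lipschitz: "(\<alpha> * L + 1)-lipschitz_on {0..} g"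
proof -
  have "(\<alpha> * L)-lipschitz_on {0..} (\<lambda>x. \<alpha> * f x)"
    using lipschitz_on_cmult_real_nonneg[OF f_lip] alpha_pos by simp
  moreover have "1-lipschitz_on {0..} (\<lambda>x::real. (1 - \<alpha>) * x)"
    using lipschitz_on_cmult_real_upper[OF lipschitz_on_id, of "1 - \<alpha>" 1] alpha_le_1 alpha_pos
    by simp
  ultimately show ?thesis
    unfolding g_eq by (rule lipschitz_on_add)
qed

lemma g_nonneg: "x \<ge> 0 \<Longrightarrow> g x \<ge> 0"
  using f_nonneg alpha_pos alpha_le_1 g_def by simp

lemma g_beyond: "x \<ge> abar \<Longrightarrow> g x = (1 - \<alpha>) * x"
  using f_zero g_def by simp

lemma g_maps_interval:
  assumes "abar \<le> M"
  shows "g ` {0..M} \<subseteq> {0..M}"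
proof -
  have "g x \<le> M" if "x \<in> {0..M}" for x
  proof -
    have "g x \<le> g M"
      using mono_onD[OF g_mono] that by auto
    also have "\<dots> = M - \<alpha> * M"
      using g_beyond[OF assms] by (simp add: algebra_simps)
    also have "\<dots> \<le> M"
      using alpha_pos abar_pos assms by simp
    finally show ?thesis .
  qed
  then show ?thesis using g_nonneg by auto
qed

lemma orbit_tendsto_fixpoint:
  assumes "xs 0 \<ge> 0" and orbit: "\<forall>k. xs (Suc k) = g (xs k)"
  obtains p where "p \<ge> 0" and "f p = p" and "xs \<longlonglongrightarrow> p"
proof -
  define M where "M = max (xs 0) abar"
  have "mono_on {0..M} g"
    using mono_on_subset[OF g_mono] by auto
  moreover have "g ` {0..M} \<subseteq> {0..M}"
    using g_maps_interval M_def by simp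
  moreover have "continuous_on {0..M} g"
    using lipschitz_on_continuous_on[OF lipschitz_on_subset[OF g_lipschitz]] by auto
  moreover have "xs 0 \<in> {0..M}"
    using assms(1) M_def by auto
  ultimately obtain p where "p \<in> {0..M}" "g p = p" "xs \<longlonglongrightarrow> p"
    using iterates_mono_on_interval_tendsto_fixpoint orbit by blast
  moreover from \<open>g p = p\<close> have "f p = p"
    using g_def alpha_pos by (simp add: algebra_simps)
  ultimately show thesis
    using that by auto
qed

end

theorem mainTheorem9:
  fixes f g :: "real \<Rightarrow> real" and abar L \<alpha> :: real
  assumes abar_pos: "abar > 0"
    and f_nonneg: "\<forall>x\<ge>0. f x \<ge> 0"
    and f_lip: "L-lipschitz_on {0..} f"
    and f_conc: "strictly_concave_on {0..abar} f"
    and f_zero: "\<forall>x\<ge>abar. f x = 0"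
    and alpha_pos: "0 < \<alpha>" and alpha_le: "\<alpha> \<le> 1 / (L + 1)"
    and g_def: "\<forall>x. g x = \<alpha> * f x + (1 - \<alpha>) * x"
  shows "g ` {0..abar} \<subseteq> {0..abar}
    \<and> strictly_concave_on {0..abar} g
    \<and> (\<exists>K>0. K-lipschitz_on {0..abar} g)
    \<and> (\<forall>x\<in>{0..abar}. g x \<ge> 0)
    \<and> (\<exists>!xbar. xbar \<in> {0..abar} \<and> (\<forall>x\<in>{0..abar}. g x \<le> g xbar))
    \<and> (\<forall>xbar\<in>{0..abar}. (\<forall>x\<in>{0..abar}. g x \<le> g xbar) \<longrightarrow>
          (\<exists>K. 0 < K \<and> K < 1 \<and> K-lipschitz_on {xbar..abar} g))
    \<and> (\<exists>b\<in>{0..abar}. b > 0 \<and> g b < b)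
    \<and> (\<forall>x0 > 0. \<forall>xs :: nat \<Rightarrow> real. xs 0 = x0 \<and> (\<forall>k. xs (Suc k) = g (xs k)) \<longrightarrow>
          (\<exists>p\<ge>0. f p = p \<and> xs \<longlonglongrightarrow> p))"
proof -
  interpret relaxation abar L \<alpha> f g
    using assms by unfold_locales
  show ?thesis
  proof (intro conjI)
    show "g ` {0..abar} \<subseteq> {0..abar}"
      using g_maps_interval by simp
    show "strictly_concave_on {0..abar} g"
      by (fact g_strictly_concave)
    show "\<exists>K>0. K-lipschitz_on {0..abar} g"
      using lipschitz_on_subset[OF g_lipschitz] alpha_pos L_nonneg
      by (intro exI[of _ "\<alpha> * L + 1"]) (auto intro: add_nonneg_pos)
    show "\<forall>x\<in>{0..abar}. g x \<ge> 0"
      using g_nonneg by simp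
    show "\<exists>!xbar. xbar \<in> {0..abar} \<and> (\<forall>x\<in>{0..abar}. g x \<le> g xbar)"
      by (simp only: g_maximiser_iff) simp
    show "\<forall>xbar\<in>{0..abar}. (\<forall>x\<in>{0..abar}. g x \<le> g xbar) \<longrightarrow>
          (\<exists>K. 0 < K \<and> K < 1 \<and> K-lipschitz_on {xbar..abar} g)"
    proof (intro ballI impI)
      fix xbar assume "xbar \<in> {0..abar}" "\<forall>x\<in>{0..abar}. g x \<le> g xbar"
      then have "{xbar..abar} = {abar}"
        using g_maximiser_iff by auto
      then show "\<exists>K. 0 < K \<and> K < 1 \<and> K-lipschitz_on {xbar..abar} g"
        by (intro exI[of _ "1/2"]) simp
    qed
    show "\<exists>b\<in>{0..abar}. b > 0 \<and> g b < b"
      using g_beyond abar_pos alpha_pos by (intro bexI[of _ abar]) auto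
    show "\<forall>x0 > 0. \<forall>xs :: nat \<Rightarrow> real. xs 0 = x0 \<and> (\<forall>k. xs (Suc k) = g (xs k)) \<longrightarrow>
          (\<exists>p\<ge>0. f p = p \<and> xs \<longlonglongrightarrow> p)"
      using orbit_tendsto_fixpoint by (metis less_imp_le)
  qed
qed

end
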